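(* Let $\Theta$ be a causal theory over $\mathfrak L$. For every $M\in\mathfrak M$ (identified with the set of $\mathfrak L$-sentences true in $M$) and every $p\in\mathcal L_\Box$, either $M\vdash_\Box p$ or $M\vdash_\Box\neg p$ is derivable in $\mathbf S_\Theta$.
   Context: $\mathfrak L$ is a classical propositional language; $\mathfrak M$ is the set of its models, each identified with the maximal classically consistent set of $\mathfrak L$-sentences true in it. A causal rule is $\phi\triangleright\psi$ with $\phi,\psi\in\mathfrak L$; a causal theory $\Theta$ is a set of causal rules. $\mathcal L_\Box$ is generated by $\mathfrak L$ and a unary $\Box$. The sequent calculus $\mathbf S_\Theta$ derives sequents $\Gamma\vdash_\Box\Delta$ (collections of $\mathcal L_\Box$-formulas, possibly infinite; derivations well-founded, possibly infinitely branching) via: axiom $p\vdash_\Box p$; $\perp\vdash_\Box$; $\vdash_\Box\top$; weakening and contraction on both sides; classical two-sided LK rules for $\neg,\wedge,\vee,\to$ with shared contexts; $\Box$R: if $\phi_1\triangleright\psi_1,\dots,\phi_k\triangleright\psi_k\in\Theta$ and $\psi_1,\dots,\psi_k\vdash_\Box p$ is derivable, from $\Gamma\vdash_\Box\phi_1\wedge\dots\wedge\phi_k,\Delta$ infer $\Gamma\vdash_\Box\Box p,\Delta$; $\Box$L: letting $\{S_j\}_{j\in J}$ be all finite $S_j\subseteq\Theta$ with $\{\psi:\phi\triangleright\psi\in S_j\}\vdash_\Box p$ derivable, from $\Gamma,\{\phi:\phi\triangleright\psi\in S_j\}\vdash_\Box\Delta$ for all $j\in J$ infer $\Gamma,\Box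 p\vdash_\Box\Delta$; multicut: from $\Gamma\vdash_\Box p^m,\Delta$ and $\Gamma',p^n\vdash_\Box\Delta'$ ($m,n>0$) infer $\Gamma,\Gamma'\vdash_\Box\Delta,\Delta'$. *)

theory Defs
  imports Main
begin

datatype 'a pform = PAtom 'a | PBot | PTop | PNeg "'a pform"
  | PAnd "'a pform" "'a pform" | POr "'a pform" "'a pform" | PImp "'a pform" "'a pform"

datatype 'a mform = Atom 'a | Bot | Top | Neg "'a mform"
  | And "'a mform" "'a mform" | Or "'a mform" "'a mform" | Imp "'a mform" "'a mform"
  | Box "'a mform"

fun emb :: "'a pform \<Rightarrow> 'a mform" where
  "emb (PAtom a) = Atom a"
| "emb PBot = Bot"
| "emb PTop = Top"
| "emb (PNeg x) = Neg (emb x)"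
| "emb (PAnd x y) = And (emb x) (emb y)"
| "emb (POr x y) = Or (emb x) (emb y)"
| "emb (PImp x y) = Imp (emb x) (emb y)"

fun peval :: "('a \<Rightarrow> bool) \<Rightarrow> 'a pform \<Rightarrow> bool" where
  "peval v (PAtom a) = v a"
| "peval v PBot = False"
| "peval v PTop = True"
| "peval v (PNeg x) = (\<not> peval v x)"
| "peval v (PAnd x y) = (peval v x \<and> peval v y)"
| "peval v (POr x y) = (peval v x \<or> peval v y)"
| "peval v (PImp x y) = (peval v x \<longrightarrow> peval v y)"

definition models :: "'a pform set set" where
  "models = {{\<phi>. peval v \<phi>} | v. True}"

fun bdepth :: "'a mform \<Rightarrow> nat" where
  "bdepth (Atom a) = 0"
| "bdepth Bot = 0"
| "bdepth Top = 0"
| "bdepth (Neg x) = bdepth x"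
| "bdepth (And x y) = max (bdepth x) (bdepth y)"
| "bdepth (Or x y) = max (bdepth x) (bdepth y)"
| "bdepth (Imp x y) = max (bdepth x) (bdepth y)"
| "bdepth (Box x) = Suc (bdepth x)"

fun Conj :: "'a mform list \<Rightarrow> 'a mform" where
  "Conj [] = Top"
| "Conj [x] = x"
| "Conj (x # xs) = And x (Conj xs)"

type_synonym 'a ctheory = "('a pform \<times> 'a pform) set"

text \<open>The sequent calculus S_Theta, parameterised by
  ok q: whether the Box rules may be applied to Box q, and
  side q Psi: whether the side-condition sequent Psi derives q counts as derivable.
  Sequents are pairs of (possibly infinite) sets; contraction is built in.
  Derivations are well-founded (inductive), possibly infinitely branching (Box L).\<close>
inductive sc :: "'a ctheory \<Rightarrow> ('a mform \<Rightarrow> bool) \<Rightarrow> ('a mform \<Rightarrow> 'a mform set \<Rightarrow> bool)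
    \<Rightarrow> 'a mform set \<Rightarrow> 'a mform set \<Rightarrow> bool"
  for \<Theta> ok side where
  ax: "sc \<Theta> ok side {p} {p}"
| botL: "sc \<Theta> ok side {Bot} {}"
| topR: "sc \<Theta> ok side {} {Top}"
| weak: "sc \<Theta> ok side \<Gamma> \<Delta> \<Longrightarrow> \<Gamma> \<subseteq> \<Gamma>' \<Longrightarrow> \<Delta> \<subseteq> \<Delta>' \<Longrightarrow> sc \<Theta> ok side \<Gamma>' \<Delta>'"
| negL: "sc \<Theta> ok side \<Gamma> (insert A \<Delta>) \<Longrightarrow> sc \<Theta> ok side (insert (Neg A) \<Gamma>) \<Delta>"
| negR: "sc \<Theta> ok side (insert A \<Gamma>) \<Delta> \<Longrightarrow> sc \<Theta> ok side \<Gamma> (insert (Neg A) \<Delta>)"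
| andL: "sc \<Theta> ok side (insert A (insert B \<Gamma>)) \<Delta> \<Longrightarrow> sc \<Theta> ok side (insert (And A B) \<Gamma>) \<Delta>"
| andR: "sc \<Theta> ok side \<Gamma> (insert A \<Delta>) \<Longrightarrow> sc \<Theta> ok side \<Gamma> (insert B \<Delta>)
         \<Longrightarrow> sc \<Theta> ok side \<Gamma> (insert (And A B) \<Delta>)"
| orL: "sc \<Theta> ok side (insert A \<Gamma>) \<Delta> \<Longrightarrow> sc \<Theta> ok side (insert B \<Gamma>) \<Delta>
         \<Longrightarrow> sc \<Theta> ok side (insert (Or A B) \<Gamma>) \<Delta>"
| orR: "sc \<Theta> ok side \<Gamma> (insert A (insert B \<Delta>)) \<Longrightarrow> sc \<Theta> ok side \<Gamma> (insert (Or A B) \<Delta>)"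
| impL: "sc \<Theta> ok side \<Gamma> (insert A \<Delta>) \<Longrightarrow> sc \<Theta> ok side (insert B \<Gamma>) \<Delta>
         \<Longrightarrow> sc \<Theta> ok side (insert (Imp A B) \<Gamma>) \<Delta>"
| impR: "sc \<Theta> ok side (insert A \<Gamma>) (insert B \<Delta>) \<Longrightarrow> sc \<Theta> ok side \<Gamma> (insert (Imp A B) \<Delta>)"
| boxR: "ok p \<Longrightarrow> set rs \<subseteq> \<Theta> \<Longrightarrow> side p (emb ` snd ` set rs)
         \<Longrightarrow> sc \<Theta> ok side \<Gamma> (insert (Conj (map (emb \<circ> fst) rs)) \<Delta>)
         \<Longrightarrow> sc \<Theta> ok side \<Gamma> (insert (Box p) \<Delta>)"
| boxL: "ok p \<Longrightarrow> (\<forall>S. finite S \<and> S \<subseteq> \<Theta> \<and> side p (emb ` snd ` S)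
              \<longrightarrow> sc \<Theta> ok side (\<Gamma> \<union> emb ` fst ` S) \<Delta>)
         \<Longrightarrow> sc \<Theta> ok side (insert (Box p) \<Gamma>) \<Delta>"
| cut: "sc \<Theta> ok side \<Gamma> (insert p \<Delta>) \<Longrightarrow> sc \<Theta> ok side (insert p \<Gamma>') \<Delta>'
         \<Longrightarrow> sc \<Theta> ok side (\<Gamma> \<union> \<Gamma>') (\<Delta> \<union> \<Delta>')"

text \<open>Stratification by Box depth (to make the side conditions well defined):
  lv \<Theta> (Suc n) k, for k \<le> n, is derivability with Box rules restricted to Box q
  with bdepth q < k, side conditions for q being checked at level bdepth q.\<close>
primrec lv :: "'a ctheory \<Rightarrow> nat \<Rightarrow> nat \<Rightarrow> 'a mform set \<Rightarrow> 'a mform set \<Rightarrow> bool" where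
  "lv \<Theta> 0 = (\<lambda>_ _ _. False)"
| "lv \<Theta> (Suc n) = (lv \<Theta> n)(n := sc \<Theta> (\<lambda>q. bdepth q < n) (\<lambda>q \<Psi>. lv \<Theta> n (bdepth q) \<Psi> {q}))"

definition derivable :: "'a ctheory \<Rightarrow> 'a mform set \<Rightarrow> 'a mform set \<Rightarrow> bool" where
  "derivable \<Theta> \<Gamma> \<Delta> =
     sc \<Theta> (\<lambda>q. True) (\<lambda>q \<Psi>. lv \<Theta> (Suc (bdepth q)) (bdepth q) \<Psi> {q}) \<Gamma> \<Delta>"

end

theory Submission
  imports Defs
begin

(* Fix a context G of L_Box formulas that is propositionally complete: for every
   sentence phi of L, G contains phi or its negation.  The context emb ` M of a
   model M is such a context.  Call a formula A decided by G if G derives A or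
   G derives Neg A.  Decidedness is closed under every connective, using only the
   logical rules of the calculus together with the admissible inversion of Neg on
   the right (obtained by cut).  For Box p, either some finite S of rules whose
   heads derive p has all antecedents in G, and Box R proves Box p; or every such
   S has an antecedent whose negation lies in G, so each premise of Box L is
   closed and G refutes Box p.  Structural induction on p then gives the theorem
   for any calculus in which the Box rules may be applied to every formula,
   whatever the side condition is; derivability in S_Theta is one instance. *)

context
  fixes \<Theta> :: "'a ctheory"
    and ok :: "'a mform \<Rightarrow> bool"
    and side :: "'a mform \<Rightarrow> 'a mform set \<Rightarrow> bool"
begin

lemma sc_assumption: "A \<in> \<Gamma> \<Longrightarrow> sc \<Theta> ok side \<Gamma> {A}"
  by (rule sc.weak[OF sc.ax]) auto

lemma sc_contradiction:
  assumes "A \<in> \<Gamma>" and "Neg A \<in> \<Gamma>"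
  shows "sc \<Theta> ok side \<Gamma> {}"
proof -
  have "sc \<Theta> ok side (insert (Neg A) {A}) {}"
    by (rule sc.negL) (simp add: sc.ax)
  then show ?thesis by (rule sc.weak) (use assms in auto)
qed

lemma sc_refute: "sc \<Theta> ok side (insert A \<Gamma>) {} \<Longrightarrow> sc \<Theta> ok side \<Gamma> {Neg A}"
  using sc.negR[of \<Theta> ok side A \<Gamma> "{}"] by simp

lemma sc_refute_inv:
  assumes "sc \<Theta> ok side \<Gamma> {Neg A}"
  shows "sc \<Theta> ok side (insert A \<Gamma>) {}"
proof -
  have "sc \<Theta> ok side (insert (Neg A) {A}) {}"
    by (rule sc.negL) (simp add: sc.ax)
  with assms have "sc \<Theta> ok side (\<Gamma> \<union> {A}) {}"
    using sc.cut[of \<Theta> ok side \<Gamma> "Neg A" "{}" "{A}" "{}"] by simp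
  then show ?thesis by (rule sc.weak) auto
qed

lemma sc_Conj: "set xs \<subseteq> \<Gamma> \<Longrightarrow> sc \<Theta> ok side \<Gamma> {Conj xs}"
proof (induction xs rule: Conj.induct)
  case 1
  show ?case by (rule sc.weak[OF sc.topR]) auto
next
  case (2 x)
  then show ?case by (auto intro: sc_assumption)
next
  case (3 x y xs)
  then have "sc \<Theta> ok side \<Gamma> (insert x {})" "sc \<Theta> ok side \<Gamma> (insert (Conj (y # xs)) {})"
    by (auto intro: sc_assumption)
  then show ?case by (simp add: sc.andR)
qed

definition decided :: "'a mform set \<Rightarrow> 'a mform \<Rightarrow> bool" where
  "decided \<Gamma> A \<longleftrightarrow> sc \<Theta> ok side \<Gamma> {A} \<or> sc \<Theta> ok side \<Gamma> {Neg A}"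

definition prop_complete :: "'a mform set \<Rightarrow> bool" where
  "prop_complete \<Gamma> \<longleftrightarrow> (\<forall>\<phi>. emb \<phi> \<in> \<Gamma> \<or> Neg (emb \<phi>) \<in> \<Gamma>)"

lemma decided_member: "A \<in> \<Gamma> \<or> Neg A \<in> \<Gamma> \<Longrightarrow> decided \<Gamma> A"
  unfolding decided_def by (auto intro: sc_assumption)

lemma decided_Atom: "prop_complete \<Gamma> \<Longrightarrow> decided \<Gamma> (Atom a)"
  unfolding prop_complete_def
  by (rule decided_member) (metis emb.simps(1))

lemma decided_Bot: "decided \<Gamma> Bot"
  unfolding decided_def by (metis sc_refute sc.botL sc.weak empty_subsetI insert_mono)

lemma decided_Top: "decided \<Gamma> Top"
  unfolding decided_def by (metis sc.topR sc.weak empty_subsetI order_refl)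

lemma decided_Neg: "decided \<Gamma> A \<Longrightarrow> decided \<Gamma> (Neg A)"
  unfolding decided_def
  using sc.negL[of \<Theta> ok side \<Gamma> A "{}"] sc_refute[of "Neg A" \<Gamma>] by auto

lemma decided_And:
  assumes "decided \<Gamma> A" and "decided \<Gamma> B"
  shows "decided \<Gamma> (And A B)"
proof (cases "sc \<Theta> ok side \<Gamma> {A} \<and> sc \<Theta> ok side \<Gamma> {B}")
  case True
  then show ?thesis
    unfolding decided_def using sc.andR[of \<Theta> ok side \<Gamma> A "{}" B] by auto
next
  case False
  with assms have "sc \<Theta> ok side (insert A \<Gamma>) {} \<or> sc \<Theta> ok side (insert B \<Gamma>) {}"
    unfolding decided_def using sc_refute_inv by blast
  then have "sc \<Theta> ok side (insert A (insert B \<Gamma>)) {}"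
    by (metis insert_commute sc.weak subset_insertI order_refl)
  then have "sc \<Theta> ok side (insert (And A B) \<Gamma>) {}" by (rule sc.andL)
  then show ?thesis unfolding decided_def by (simp add: sc_refute)
qed

lemma decided_Or:
  assumes "decided \<Gamma> A" and "decided \<Gamma> B"
  shows "decided \<Gamma> (Or A B)"
proof (cases "sc \<Theta> ok side \<Gamma> {A} \<or> sc \<Theta> ok side \<Gamma> {B}")
  case True
  then have "sc \<Theta> ok side \<Gamma> (insert A (insert B {}))"
    by (metis insert_commute sc.weak subset_insertI order_refl)
  then have "sc \<Theta> ok side \<Gamma> {Or A B}" by (rule sc.orR)
  then show ?thesis unfolding decided_def ..
next
  case False
  with assms have "sc \<Theta> ok side (insert A \<Gamma>) {}" "sc \<Theta> ok side (insert B \<Gamma>) {}"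
    unfolding decided_def using sc_refute_inv by blast+
  then have "sc \<Theta> ok side (insert (Or A B) \<Gamma>) {}" by (rule sc.orL)
  then show ?thesis unfolding decided_def by (simp add: sc_refute)
qed

lemma decided_Imp:
  assumes "decided \<Gamma> A" and "decided \<Gamma> B"
  shows "decided \<Gamma> (Imp A B)"
proof (cases "sc \<Theta> ok side (insert A \<Gamma>) {} \<or> sc \<Theta> ok side \<Gamma> {B}")
  case True
  then have "sc \<Theta> ok side (insert A \<Gamma>) (insert B {})"
    by (metis sc.weak subset_insertI order_refl empty_subsetI)
  then have "sc \<Theta> ok side \<Gamma> {Imp A B}" by (rule sc.impR)
  then show ?thesis unfolding decided_def ..
next
  case False
  with assms have "sc \<Theta> ok side \<Gamma> {A}" "sc \<Theta> ok side (insert B \<Gamma>) {}"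
    unfolding decided_def using sc_refute_inv by blast+
  then have "sc \<Theta> ok side (insert (Imp A B) \<Gamma>) {}" by (rule sc.impL)
  then show ?thesis unfolding decided_def by (simp add: sc_refute)
qed

text \<open>The modal case: the Box rules can be applied to \<open>Box p\<close>, whatever \<open>p\<close> is, since
  the decision depends only on which rule antecedents belong to the context.\<close>
lemma decided_Box:
  assumes complete: "prop_complete \<Gamma>" and "ok p"
  shows "decided \<Gamma> (Box p)"
proof (cases "\<exists>S. finite S \<and> S \<subseteq> \<Theta> \<and> side p (emb ` snd ` S) \<and> emb ` fst ` S \<subseteq> \<Gamma>")
  case True
  then obtain S where S: "finite S" "S \<subseteq> \<Theta>" "side p (emb ` snd ` S)" "emb ` fst ` S \<subseteq> \<Gamma>"
    by blast
  obtain rs where rs: "set rs = S" using finite_list[OF S(1)] by blast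
  have "sc \<Theta> ok side \<Gamma> (insert (Conj (map (emb \<circ> fst) rs)) {})"
    using sc_Conj[of "map (emb \<circ> fst) rs" \<Gamma>] rs S(4) by auto
  then have "sc \<Theta> ok side \<Gamma> {Box p}"
    using sc.boxR[of ok p rs \<Theta> side \<Gamma> "{}"] \<open>ok p\<close> rs S(2,3) by simp
  then show ?thesis unfolding decided_def ..
next
  case False
  have "sc \<Theta> ok side (\<Gamma> \<union> emb ` fst ` S) {}"
    if "finite S \<and> S \<subseteq> \<Theta> \<and> side p (emb ` snd ` S)" for S
  proof -
    from False that obtain \<phi> where "emb \<phi> \<in> emb ` fst ` S" "emb \<phi> \<notin> \<Gamma>" by blast
    with complete have "Neg (emb \<phi>) \<in> \<Gamma>" unfolding prop_complete_def by blast
    with \<open>emb \<phi> \<in> emb ` fst ` S\<close> show ?thesis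
      by (intro sc_contradiction[of "emb \<phi>"]) auto
  qed
  then have "sc \<Theta> ok side (insert (Box p) \<Gamma>) {}"
    using \<open>ok p\<close> by (intro sc.boxL) auto
  then show ?thesis unfolding decided_def by (simp add: sc_refute)
qed

lemma prop_complete_decides:
  assumes "prop_complete \<Gamma>" and "\<And>q. ok q"
  shows "decided \<Gamma> p"
proof (induction p)
  case (Atom a)
  show ?case using assms(1) by (rule decided_Atom)
next
  case (Box p)
  show ?case using assms by (intro decided_Box)
qed (auto intro: decided_Bot decided_Top decided_Neg decided_And decided_Or decided_Imp)

end

lemma model_prop_complete:
  assumes "M \<in> models"
  shows "prop_complete (emb ` M)"
proof -
  from assms obtain v where M: "M = {\<phi>. peval v \<phi>}" unfolding models_def by blast
  have "emb \<phi> \<in> emb ` M \<or> emb (PNeg \<phi>) \<in> emb ` M" for \<phi>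
  proof (cases "peval v \<phi>")
    case True
    then show ?thesis unfolding M by blast
  next
    case False
    then have "PNeg \<phi> \<in> M" unfolding M by simp
    then show ?thesis by blast
  qed
  then show ?thesis unfolding prop_complete_def by simp
qed

theorem mainTheorem13:
  fixes \<Theta> :: "'a ctheory" and M :: "'a pform set" and p :: "'a mform"
  assumes "M \<in> models"
  shows "derivable \<Theta> (emb ` M) {p} \<or> derivable \<Theta> (emb ` M) {Neg p}"
  using prop_complete_decides[OF model_prop_complete[OF assms]]
  unfolding derivable_def decided_def by simp

end
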